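(* Structural embeddings with $\mathrm{LPE}$ as node-level positional encoding are sufficiently node- and adjacency-identifying.
   Context: Graphs $G$ are finite, undirected, without self-loops and without isolated nodes, with $n$ nodes, adjacency matrix $\mathbf{A}(G)$ and degree matrix $\mathbf{D}$. The graph Laplacian is $\mathbf{L}=\mathbf{D}-\mathbf{A}(G)$ (the normalized Laplacian $\mathbf{D}^{-1/2}\mathbf{L}\mathbf{D}^{-1/2}$ may be used instead). Let $\lambda=(\lambda_1,\dots,\lambda_l)^T$ be the $l$ smallest (possibly repeated) eigenvalues and $\mathbf{V}\in\mathbb{R}^{n\times l}$ have as $j$-th column an eigenvector for $\lambda_j$ (orthonormal). $\mathrm{LPE}(\mathbf{V},\lambda)=\rho\big([\phi(\mathbf{V}^T_1,\lambda+\epsilon)\cdots\phi(\mathbf{V}^T_n,\lambda+\epsilon)]\big)$, where $\epsilon\in\mathbb{R}^l$ is a learnable zero-initialized vector, $\phi\colon\mathbb{R}^2\to\mathbb{R}^d$ is an FFN applied to each pair $(\mathbf{V}_{ij},\lambda_j+\epsilon_j)$, and $\rho\colon\mathbb{R}^{l\times d}\to\mathbb{R}^d$ is a permutation-equivariant network applied per node (e.g. sum over the $l$ entries followed by an FFN), giving a vector $\mathrm{emb}_{PE}(v)$ for each node $v$. Structural embeddings: $\mathbf{P}(v)=\mathsf{FFN}(\mathrm{emb}_{\deg}(v)+\mathrm{emb}_{PE}(v))$, with $\mathrm{emb}_{\deg}$ a learnable embedding of the node degree and $\mathsf{FFN}$ an MLP; all networks and dimensions are parameters. For $\mathbf{P}\in\mathbb{R}^{n\times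 d}$ and $\mathbf{W}^Q,\mathbf{W}^K\in\mathbb{R}^{d\times d}$ let $\tilde{\mathbf{P}}=\frac{1}{\sqrt{d_k}}\mathbf{P}\mathbf{W}^Q(\mathbf{P}\mathbf{W}^K)^T$ ($d_k>0$ fixed). $\mathbf{P}$ is node-identifying if for some $\mathbf{W}^Q,\mathbf{W}^K$: $\tilde{\mathbf{P}}_{ij}=\max_k\tilde{\mathbf{P}}_{ik}\iff i=j$; adjacency-identifying if for some $\mathbf{W}^Q,\mathbf{W}^K$: $\tilde{\mathbf{P}}_{ij}=\max_k\tilde{\mathbf{P}}_{ik}\iff\mathbf{A}(G)_{ij}=1$. Parametrized structural embeddings are sufficiently node-identifying (resp. adjacency-identifying) if there is a node-identifying (resp. adjacency-identifying) matrix $\mathbf{P}$ such that for every $\varepsilon>0$ some parameter choice yields embeddings $\mathbf{Q}$ with $\|\mathbf{P}-\mathbf{Q}\|_F<\varepsilon$. *)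

theory Defs
  imports Complex_Main
begin

definition simple_graph_no_isolated :: "nat \<Rightarrow> (nat \<Rightarrow> nat \<Rightarrow> bool) \<Rightarrow> bool" where
  "simple_graph_no_isolated n E \<longleftrightarrow>
     (\<forall>i<n. \<forall>j<n. E i j \<longleftrightarrow> E j i) \<and>
     (\<forall>i<n. \<not> E i i) \<and>
     (\<forall>i<n. \<exists>j<n. E i j)"

definition adj :: "(nat \<Rightarrow> nat \<Rightarrow> bool) \<Rightarrow> nat \<Rightarrow> nat \<Rightarrow> real" where
  "adj E i j = (if E i j then 1 else 0)"

definition deg :: "nat \<Rightarrow> (nat \<Rightarrow> nat \<Rightarrow> bool) \<Rightarrow> nat \<Rightarrow> nat" where
  "deg n E v = card {u. u < n \<and> E v u}"

definition laplacian :: "nat \<Rightarrow> (nat \<Rightarrow> nat \<Rightarrow> bool) \<Rightarrow> nat \<Rightarrow> nat \<Rightarrow> real" where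
  "laplacian n E i j = (if i = j then real (deg n E i) else 0) - adj E i j"

text \<open>V (n x n, column j = eigenvector for lam j) is an orthonormal eigenbasis of the
  Laplacian with eigenvalues listed in nondecreasing order (the l = n smallest eigenvalues,
  with multiplicity).\<close>
definition laplacian_eigendecomp ::
  "nat \<Rightarrow> (nat \<Rightarrow> nat \<Rightarrow> bool) \<Rightarrow> (nat \<Rightarrow> nat \<Rightarrow> real) \<Rightarrow> (nat \<Rightarrow> real) \<Rightarrow> bool" where
  "laplacian_eigendecomp n E V lam \<longleftrightarrow>
     (\<forall>i<n. \<forall>j<n. (\<Sum>k<n. laplacian n E i k * V k j) = lam j * V i j) \<and>
     (\<forall>j<n. \<forall>k<n. (\<Sum>i<n. V i j * V i k) = (if j = k then 1 else 0)) \<and>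
     (\<forall>j k. j \<le> k \<and> k < n \<longrightarrow> lam j \<le> lam k)"

definition relu :: "real \<Rightarrow> real" where
  "relu x = max 0 x"

type_synonym layer = "real list list \<times> real list"

definition affine :: "layer \<Rightarrow> real list \<Rightarrow> real list" where
  "affine L x = map (\<lambda>(row, c). sum_list (map2 (*) row x) + c) (zip (fst L) (snd L))"

fun mlp :: "layer list \<Rightarrow> real list \<Rightarrow> real list" where
  "mlp [] x = x"
| "mlp [L] x = affine L x"
| "mlp (L # L' # Ls) x = mlp (L' # Ls) (map relu (affine L x))"

fun mlp_dims :: "layer list \<Rightarrow> nat \<Rightarrow> nat \<Rightarrow> bool" where
  "mlp_dims [] a b = (a = b)"
| "mlp_dims (L # Ls) a b =
     (length (snd L) = length (fst L) \<and> (\<forall>row \<in> set (fst L). length row = a) \<and>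
      mlp_dims Ls (length (fst L)) b)"

definition ffn :: "nat \<Rightarrow> nat \<Rightarrow> layer list \<Rightarrow> bool" where
  "ffn a b Ls \<longleftrightarrow> Ls \<noteq> [] \<and> mlp_dims Ls a b"

text \<open>LPE(V, lam) at node i: rho applied to the n x dphi matrix of rows
  phi(V i j, lam j + eps j); rho = sum over the rows followed by an FFN.\<close>
definition lpe ::
  "nat \<Rightarrow> (nat \<Rightarrow> nat \<Rightarrow> real) \<Rightarrow> (nat \<Rightarrow> real) \<Rightarrow>
   layer list \<Rightarrow> nat \<Rightarrow> (nat \<Rightarrow> real) \<Rightarrow> layer list \<Rightarrow> nat \<Rightarrow> real list" where
  "lpe n V lam phi dphi eps rho i =
     mlp rho (map (\<lambda>k. \<Sum>j<n. mlp phi [V i j, lam j + eps j] ! k) [0..<dphi])"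

definition struct_emb ::
  "nat \<Rightarrow> (nat \<Rightarrow> nat \<Rightarrow> bool) \<Rightarrow> (nat \<Rightarrow> nat \<Rightarrow> real) \<Rightarrow> (nat \<Rightarrow> real) \<Rightarrow>
   layer list \<Rightarrow> nat \<Rightarrow> (nat \<Rightarrow> real) \<Rightarrow> layer list \<Rightarrow> (nat \<Rightarrow> real list) \<Rightarrow> layer list \<Rightarrow>
   nat \<Rightarrow> real list" where
  "struct_emb n E V lam phi dphi eps rho emb_deg F v =
     mlp F (map2 (+) (emb_deg (deg n E v)) (lpe n V lam phi dphi eps rho v))"

definition lpe_params_ok ::
  "nat \<Rightarrow> layer list \<Rightarrow> nat \<Rightarrow> layer list \<Rightarrow> nat \<Rightarrow> (nat \<Rightarrow> real list) \<Rightarrow> layer list \<Rightarrow> bool" where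
  "lpe_params_ok d phi dphi rho de emb_deg F \<longleftrightarrow>
     ffn 2 dphi phi \<and> ffn dphi de rho \<and> (\<forall>m. length (emb_deg m) = de) \<and> ffn de d F"

text \<open>Rows P v (v < n) of length d form the matrix P in R^{n x d}.\<close>
definition attn_scores ::
  "nat \<Rightarrow> real \<Rightarrow> (nat \<Rightarrow> real list) \<Rightarrow> (nat \<Rightarrow> nat \<Rightarrow> real) \<Rightarrow> (nat \<Rightarrow> nat \<Rightarrow> real) \<Rightarrow>
   nat \<Rightarrow> nat \<Rightarrow> real" where
  "attn_scores d dk P WQ WK i j =
     (1 / sqrt dk) * (\<Sum>a<d. (\<Sum>b<d. P i ! b * WQ b a) * (\<Sum>b<d. P j ! b * WK b a))"

definition node_identifying :: "nat \<Rightarrow> nat \<Rightarrow> real \<Rightarrow> (nat \<Rightarrow> real list) \<Rightarrow> bool" where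
  "node_identifying n d dk P \<longleftrightarrow>
     (\<exists>WQ WK. \<forall>i<n. \<forall>j<n.
        attn_scores d dk P WQ WK i j = (MAX k\<in>{..<n}. attn_scores d dk P WQ WK i k) \<longleftrightarrow> i = j)"

definition adjacency_identifying ::
  "nat \<Rightarrow> (nat \<Rightarrow> nat \<Rightarrow> bool) \<Rightarrow> nat \<Rightarrow> real \<Rightarrow> (nat \<Rightarrow> real list) \<Rightarrow> bool" where
  "adjacency_identifying n E d dk P \<longleftrightarrow>
     (\<exists>WQ WK. \<forall>i<n. \<forall>j<n.
        attn_scores d dk P WQ WK i j = (MAX k\<in>{..<n}. attn_scores d dk P WQ WK i k) \<longleftrightarrow>
        adj E i j = 1)"

definition frob_dist :: "nat \<Rightarrow> nat \<Rightarrow> (nat \<Rightarrow> real list) \<Rightarrow> (nat \<Rightarrow> real list) \<Rightarrow> real" where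
  "frob_dist n d P Q = sqrt (\<Sum>i<n. \<Sum>k<d. (P i ! k - Q i ! k)^2)"

definition sufficiently_identifying_lpe ::
  "(nat \<Rightarrow> (nat \<Rightarrow> real list) \<Rightarrow> bool) \<Rightarrow> nat \<Rightarrow> (nat \<Rightarrow> nat \<Rightarrow> bool) \<Rightarrow>
   (nat \<Rightarrow> nat \<Rightarrow> real) \<Rightarrow> (nat \<Rightarrow> real) \<Rightarrow> bool" where
  "sufficiently_identifying_lpe Ident n E V lam \<longleftrightarrow>
     (\<exists>d P. (\<forall>i<n. length (P i) = d) \<and> Ident d P \<and>
        (\<forall>\<epsilon>>0. \<exists>phi dphi eps rho de emb_deg F.
           lpe_params_ok d phi dphi rho de emb_deg F \<and>
           frob_dist n d P (struct_emb n E V lam phi dphi eps rho emb_deg F) < \<epsilon>))"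

end

theory Submission
  imports Defs "Jordan_Normal_Form.Determinant"
begin

(*
  The learnable shift eps can move the j-th eigenvalue to the integer j. A ReLU network phi
  with one hidden layer then routes the eigenvector entry V_vj, which lies in [-1, 1], to
  output coordinate j, so summing over j reproduces the row V_v exactly, with rho, the degree
  embedding and the final FFN trivial. Since V is orthogonal its rows are orthonormal, and
  with W^Q = I and W^K = V^T M V the attention scores become M / sqrt d_k. Taking M = I
  identifies nodes; taking M = A(G) identifies adjacency, because A(G) is symmetric with
  0/1 entries and, as there are no isolated nodes, every row contains a 1.
*)

definition dense_layer ::
  "nat \<Rightarrow> nat \<Rightarrow> (nat \<Rightarrow> nat \<Rightarrow> real) \<Rightarrow> (nat \<Rightarrow> real) \<Rightarrow> layer" where
  "dense_layer m a W b = (map (\<lambda>r. map (W r) [0..<a]) [0..<m], map b [0..<m])"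

lemma affine_dense_layer:
  assumes "length x = a"
  shows "affine (dense_layer m a W b) x = map (\<lambda>r. (\<Sum>c<a. W r c * x ! c) + b r) [0..<m]"
proof -
  have zip_rows: "zip (map (\<lambda>r. map (W r) [0..<a]) [0..<m]) (map b [0..<m])
      = map (\<lambda>r. (map (W r) [0..<a], b r)) [0..<m]"
    by (rule nth_equalityI) auto
  have "map2 (*) (map (W r) [0..<a]) x = map (\<lambda>c. W r c * x ! c) [0..<a]" for r
    using assms by (intro nth_equalityI) auto
  then show ?thesis
    using assms by (simp add: affine_def dense_layer_def zip_rows sum_list_sum_nth atLeast0LessThan)
qed

definition id_layer :: "nat \<Rightarrow> layer" where
  "id_layer m = dense_layer m m (\<lambda>r c. of_bool (r = c)) (\<lambda>_. 0)"

lemma affine_id_layer: "length x = m \<Longrightarrow> affine (id_layer m) x = x"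
  by (auto simp: id_layer_def affine_dense_layer intro!: nth_equalityI)

lemma sum_block_of_bool:
  fixes k m n :: nat and g :: "nat \<Rightarrow> 'a :: semiring_1"
  assumes "k < n" and "m > 0"
  shows "(\<Sum>r<m * n. of_bool (r div m = k) * g r) = (\<Sum>c<m. g (m * k + c))"
proof -
  have block: "{..<m * n} \<inter> {r. r div m = k} = (\<lambda>c. m * k + c) ` {..<m}"
  proof (intro equalityI subsetI)
    fix r assume "r \<in> {..<m * n} \<inter> {r. r div m = k}"
    then have "r = m * k + r mod m"
      using mult_div_mod_eq[of m r] by simp
    then show "r \<in> (\<lambda>c. m * k + c) ` {..<m}"
      by (rule image_eqI) (simp add: \<open>m > 0\<close>)
  next
    fix r assume "r \<in> (\<lambda>c. m * k + c) ` {..<m}"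
    then obtain c where "c < m" "r = m * k + c"
      by blast
    moreover have "m * k + m \<le> m * n"
      using \<open>k < n\<close> mult_le_mono2[of "Suc k" n m] by simp
    ultimately show "r \<in> {..<m * n} \<inter> {r. r div m = k}"
      by simp
  qed
  have "inj_on (\<lambda>c. m * k + c) {..<m}"
    by (simp add: inj_on_def)
  then show ?thesis
    by (simp only: sum_of_bool_mult_eq[OF finite_lessThan] block sum.reindex comp_def)
qed

lemma sum_lessThan_4: "(\<Sum>c<4::nat. f c) = f 0 + f 1 + f 2 + (f 3 :: 'a :: comm_monoid_add)"
  by (simp add: eval_nat_numeral lessThan_Suc add.commute add.left_commute)

definition spike :: "real \<Rightarrow> real \<Rightarrow> real" where
  "spike s x = (relu (x + 2 * s + 1) - relu (- x + 2 * s + 1)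
     - relu (x + 2 * s - 1) + relu (- x + 2 * s - 1)) / 2"

lemma spike_Ints:
  assumes "\<bar>x\<bar> \<le> 1" and "s \<in> \<int>"
  shows "spike s x = (if s = 0 then x else 0)"
proof -
  consider "s \<le> -1" | "s = 0" | "s \<ge> 1"
  proof -
    obtain m :: int where "s = of_int m" using assms(2) by (auto elim: Ints_cases)
    then show ?thesis using that by (cases "m \<le> -1"; cases "m = 0") auto
  qed
  then show ?thesis
    by cases (use assms(1) in \<open>auto simp: spike_def relu_def\<close>)
qed

text \<open>Hidden unit 4k + c computes relu(\<sigma> x + 2 (t - k) + \<tau>) with (\<sigma>, \<tau>) running through
  (1, 1), (-1, 1), (1, -1), (-1, -1); output k recombines units 4k, ..., 4k + 3 into spike (t - k) x.\<close>
definition spike_net :: "nat \<Rightarrow> layer list" where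
  "spike_net n =
    [dense_layer (4 * n) 2 (\<lambda>r c. if c = 0 then [1, -1, 1, -1] ! (r mod 4) else 2)
       (\<lambda>r. [1, 1, -1, -1] ! (r mod 4) - 2 * real (r div 4)),
     dense_layer n (4 * n) (\<lambda>k r. of_bool (r div 4 = k) * [1, -1, -1, 1] ! (r mod 4) / 2) (\<lambda>_. 0)]"

lemma mlp_spike_net:
  assumes "k < n"
  shows "mlp (spike_net n) [x, t] ! k = spike (t - real k) x"
proof -
  define hidden where "hidden r = relu ([1, -1, 1, -1] ! (r mod 4) * x + 2 * t
    + [1, 1, -1, -1] ! (r mod 4) - 2 * real (r div 4))" for r
  have hidden_block: "hidden (4 * k + c)
      = relu ([1, -1, 1, -1] ! c * x + 2 * (t - real k) + [1, 1, -1, -1] ! c)" if "c < 4" for c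
    using that by (simp add: hidden_def algebra_simps)
  have "mlp (spike_net n) [x, t] ! k
      = (\<Sum>r<4 * n. of_bool (r div 4 = k) * ([1, -1, -1, 1] ! (r mod 4) / 2 * hidden r))"
    using assms by (simp add: spike_net_def affine_dense_layer lessThan_Suc numeral_2_eq_2
        hidden_def algebra_simps)
  also have "\<dots> = (\<Sum>c<4. [1, -1, -1, 1] ! ((4 * k + c) mod 4) / 2 * hidden (4 * k + c))"
    by (rule sum_block_of_bool[OF assms]) simp
  also have "\<dots> = (\<Sum>c<4. [1, -1, -1, 1] ! c / 2
      * relu ([1, -1, 1, -1] ! c * x + 2 * (t - real k) + [1, 1, -1, -1] ! c))"
    by (intro sum.cong) (simp_all add: hidden_block)
  also have "\<dots> = spike (t - real k) x"
    by (simp add: sum_lessThan_4 spike_def algebra_simps)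
  finally show ?thesis .
qed

lemma sum_spike_net_one_hot:
  assumes "\<forall>j<n. \<bar>x j\<bar> \<le> 1" and "k < n"
  shows "(\<Sum>j<n. mlp (spike_net n) [x j, real j] ! k) = x k"
proof -
  have "(\<Sum>j<n. mlp (spike_net n) [x j, real j] ! k) = (\<Sum>j<n. if j = k then x j else 0)"
    using assms by (intro sum.cong) (simp_all add: mlp_spike_net spike_Ints)
  then show ?thesis
    using assms(2) by simp
qed

lemma struct_emb_spike_net:
  assumes "\<forall>j<n. \<bar>V v j\<bar> \<le> 1"
  shows "struct_emb n E V lam (spike_net n) n (\<lambda>j. real j - lam j) [id_layer n]
      (\<lambda>_. replicate n 0) [id_layer n] v = map (V v) [0..<n]"
proof -
  have "map (\<lambda>k. \<Sum>j<n. mlp (spike_net n) [V v j, real j] ! k) [0..<n] = map (V v) [0..<n]"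
    using assms by (intro map_cong) (simp_all add: sum_spike_net_one_hot)
  then have lpe: "lpe n V lam (spike_net n) n (\<lambda>j. real j - lam j) [id_layer n] v = map (V v) [0..<n]"
    by (simp add: lpe_def affine_id_layer del: upt_Suc)
  have "map2 (+) (replicate n 0) (map (V v) [0..<n]) = map (V v) [0..<n]"
    by (rule nth_equalityI) auto
  with lpe show ?thesis
    by (simp add: struct_emb_def affine_id_layer del: upt_Suc)
qed

lemma sufficiently_identifying_lpeI:
  assumes "\<forall>v<n. length (P v) = d" and "Ident d P"
    and "lpe_params_ok d phi dphi rho de emb_deg F"
    and "\<forall>v<n. struct_emb n E V lam phi dphi eps rho emb_deg F v = P v"
  shows "sufficiently_identifying_lpe Ident n E V lam"
proof -
  have "frob_dist n d P (struct_emb n E V lam phi dphi eps rho emb_deg F) = 0"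
    using assms(4) by (simp add: frob_dist_def)
  then have "\<exists>phi dphi eps rho de emb_deg F. lpe_params_ok d phi dphi rho de emb_deg F \<and>
      frob_dist n d P (struct_emb n E V lam phi dphi eps rho emb_deg F) < \<epsilon>" if "\<epsilon> > 0" for \<epsilon>
    using assms(3) that by metis
  then show ?thesis
    unfolding sufficiently_identifying_lpe_def using assms(1,2) by blast
qed

lemma orthonormal_rows_if_orthonormal_cols:
  fixes V :: "nat \<Rightarrow> nat \<Rightarrow> real"
  assumes "\<forall>j<n. \<forall>k<n. (\<Sum>i<n. V i j * V i k) = (if j = k then 1 else 0)"
  shows "\<forall>i<n. \<forall>j<n. (\<Sum>k<n. V i k * V j k) = (if i = j then 1 else 0)"
proof -
  define A where "A = mat n n (\<lambda>(i, j). V i j)"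
  have "transpose_mat A * A = 1\<^sub>m n"
    using assms by (intro eq_matI)
      (simp_all add: A_def scalar_prod_def row_def col_def atLeast0LessThan)
  then have right_inverse: "A * transpose_mat A = 1\<^sub>m n"
    by (rule mat_mult_left_right_inverse[rotated 2]) (simp_all add: A_def)
  show ?thesis
  proof (intro allI impI)
    fix i j assume "i < n" "j < n"
    then have "(A * transpose_mat A) $$ (i, j) = (\<Sum>k<n. V i k * V j k)"
      by (simp add: A_def scalar_prod_def row_def col_def atLeast0LessThan)
    with right_inverse \<open>i < n\<close> \<open>j < n\<close>
    show "(\<Sum>k<n. V i k * V j k) = (if i = j then 1 else 0)"
      by simp
  qed
qed

lemma abs_le_1_if_unit_column:
  fixes V :: "nat \<Rightarrow> nat \<Rightarrow> real"
  assumes "(\<Sum>i<n. V i j * V i j) = 1" and "v < n"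
  shows "\<bar>V v j\<bar> \<le> 1"
proof -
  have "V v j * V v j \<le> (\<Sum>i<n. V i j * V i j)"
    using assms(2) by (intro member_le_sum) auto
  then have "(V v j)\<^sup>2 \<le> 1"
    using assms(1) by (simp add: power2_eq_square)
  then show ?thesis
    by (simp add: abs_square_le_1)
qed

lemma inner_orthonormal_combination:
  fixes P :: "nat \<Rightarrow> real list" and f :: "nat \<Rightarrow> real"
  assumes "\<forall>i<n. \<forall>j<n. (\<Sum>a<d. P i ! a * P j ! a) = (if i = j then 1 else 0)" and "j < n"
  shows "(\<Sum>a<d. P j ! a * (\<Sum>p<n. P p ! a * f p)) = f j"
proof -
  have "(\<Sum>a<d. P j ! a * (\<Sum>p<n. P p ! a * f p)) = (\<Sum>p<n. (\<Sum>a<d. P j ! a * P p ! a) * f p)"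
    by (simp add: sum_distrib_left sum_distrib_right mult.assoc sum.swap[of _ "{..<d}"])
  also have "\<dots> = (\<Sum>p<n. if p = j then f p else 0)"
    using assms by (intro sum.cong) auto
  also have "\<dots> = f j"
    using assms(2) by simp
  finally show ?thesis .
qed

lemma attn_scores_orthonormal_rows:
  fixes P :: "nat \<Rightarrow> real list"
  assumes orth: "\<forall>i<n. \<forall>j<n. (\<Sum>a<d. P i ! a * P j ! a) = (if i = j then 1 else 0)"
    and "i < n" and "j < n"
  shows "attn_scores d dk P (\<lambda>b a. of_bool (b = a)) (\<lambda>b a. \<Sum>p<n. P p ! b * (\<Sum>q<n. P q ! a * M p q)) i j
      = 1 / sqrt dk * M j i"
proof -
  have "(\<Sum>b<d. P j ! b * (\<Sum>p<n. P p ! b * (\<Sum>q<n. P q ! a * M p q))) = (\<Sum>q<n. P q ! a * M j q)" for a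
    by (rule inner_orthonormal_combination[OF orth \<open>j < n\<close>])
  moreover have "(\<Sum>a<d. P i ! a * (\<Sum>q<n. P q ! a * M j q)) = M j i"
    by (rule inner_orthonormal_combination[OF orth \<open>i < n\<close>])
  ultimately show ?thesis
    by (simp add: attn_scores_def)
qed

lemma scaled_indicator_eq_Max_iff:
  fixes f :: "nat \<Rightarrow> real" and n :: nat
  assumes "\<forall>k<n. f k = 0 \<or> f k = 1" and "i < n" and "f i = 1" and "c > 0" and "j < n"
  shows "c * f j = (MAX k\<in>{..<n}. c * f k) \<longleftrightarrow> f j = 1"
proof -
  have "(MAX k\<in>{..<n}. c * f k) = c"
    using assms(1-4) by (intro Max_eqI) force+
  then show ?thesis
    using assms by auto
qed

lemma conjugated_key_scores_eq_Max_iff: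
  fixes P :: "nat \<Rightarrow> real list" and M :: "nat \<Rightarrow> nat \<Rightarrow> real"
  assumes orth: "\<forall>i<n. \<forall>j<n. (\<Sum>a<d. P i ! a * P j ! a) = (if i = j then 1 else 0)"
    and "dk > 0"
    and M_sym: "\<forall>i<n. \<forall>j<n. M j i = M i j"
    and M_01: "\<forall>i<n. \<forall>j<n. M i j = 0 \<or> M i j = 1"
    and M_row: "\<forall>i<n. \<exists>j<n. M i j = 1"
    and "i < n" and "j < n"
  defines "score \<equiv> attn_scores d dk P (\<lambda>b a. of_bool (b = a))
    (\<lambda>b a. \<Sum>p<n. P p ! b * (\<Sum>q<n. P q ! a * M p q))"
  shows "score i j = (MAX k\<in>{..<n}. score i k) \<longleftrightarrow> M i j = 1"
proof -
  have score_M: "score i k = 1 / sqrt dk * M i k" if "k < n" for k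
    using attn_scores_orthonormal_rows[OF orth \<open>i < n\<close> that] M_sym \<open>i < n\<close> that
    by (simp add: score_def)
  have "(MAX k\<in>{..<n}. score i k) = (MAX k\<in>{..<n}. 1 / sqrt dk * M i k)"
    by (rule arg_cong[where f = Max], rule image_cong) (simp_all add: score_M)
  moreover obtain i' where "i' < n" "M i i' = 1"
    using M_row \<open>i < n\<close> by blast
  ultimately show ?thesis
    using scaled_indicator_eq_Max_iff[of n "M i" i' "1 / sqrt dk" j] M_01 \<open>i < n\<close> \<open>j < n\<close>
      \<open>dk > 0\<close> score_M[OF \<open>j < n\<close>]
    by simp
qed

lemma node_identifying_orthonormal_rows:
  fixes P :: "nat \<Rightarrow> real list"
  assumes "\<forall>i<n. \<forall>j<n. (\<Sum>a<d. P i ! a * P j ! a) = (if i = j then 1 else 0)" and "dk > 0"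
  shows "node_identifying n d dk P"
proof -
  let ?I = "\<lambda>i j. of_bool (i = j) :: real"
  have "\<forall>i<n. \<forall>j<n. ?I j i = ?I i j" "\<forall>i<n. \<forall>j<n. ?I i j = 0 \<or> ?I i j = 1"
      "\<forall>i<n. \<exists>j<n. ?I i j = 1"
    by auto
  from conjugated_key_scores_eq_Max_iff[OF assms this] show ?thesis
    unfolding node_identifying_def by auto
qed

lemma adjacency_identifying_orthonormal_rows:
  fixes P :: "nat \<Rightarrow> real list"
  assumes "\<forall>i<n. \<forall>j<n. (\<Sum>a<d. P i ! a * P j ! a) = (if i = j then 1 else 0)" and "dk > 0"
    and "simple_graph_no_isolated n E"
  shows "adjacency_identifying n E d dk P"
proof -
  have "\<forall>i<n. \<forall>j<n. adj E j i = adj E i j" "\<forall>i<n. \<forall>j<n. adj E i j = 0 \<or> adj E i j = 1"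
      "\<forall>i<n. \<exists>j<n. adj E i j = 1"
    using assms(3) by (auto simp: simple_graph_no_isolated_def adj_def)
  from conjugated_key_scores_eq_Max_iff[OF assms(1,2) this] show ?thesis
    unfolding adjacency_identifying_def by blast
qed

lemma lpe_params_ok_spike_net:
  "lpe_params_ok n (spike_net n) n [id_layer n] n (\<lambda>_. replicate n 0) [id_layer n]"
  by (simp add: lpe_params_ok_def ffn_def spike_net_def id_layer_def dense_layer_def)

lemma sufficiently_identifying_lpe_eigenvector_rows:
  fixes V :: "nat \<Rightarrow> nat \<Rightarrow> real"
  assumes "\<forall>j<n. \<forall>k<n. (\<Sum>i<n. V i j * V i k) = (if j = k then 1 else 0)"
    and "Ident n (\<lambda>v. map (V v) [0..<n])"
  shows "sufficiently_identifying_lpe Ident n E V lam"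
proof (rule sufficiently_identifying_lpeI)
  show "Ident n (\<lambda>v. map (V v) [0..<n])"
    by (rule assms(2))
  show "\<forall>v<n. length (map (V v) [0..<n]) = n"
    by simp
  show "lpe_params_ok n (spike_net n) n [id_layer n] n (\<lambda>_. replicate n 0) [id_layer n]"
    by (rule lpe_params_ok_spike_net)
  have "\<bar>V v j\<bar> \<le> 1" if "v < n" "j < n" for v j
    using assms(1) that by (intro abs_le_1_if_unit_column) simp_all
  then show "\<forall>v<n. struct_emb n E V lam (spike_net n) n (\<lambda>j. real j - lam j) [id_layer n]
      (\<lambda>_. replicate n 0) [id_layer n] v = map (V v) [0..<n]"
    by (simp add: struct_emb_spike_net)
qed

theorem theorem4p1:
  fixes n :: nat and E :: "nat \<Rightarrow> nat \<Rightarrow> bool"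
    and V :: "nat \<Rightarrow> nat \<Rightarrow> real" and lam :: "nat \<Rightarrow> real" and dk :: real
  assumes "simple_graph_no_isolated n E"
    and "laplacian_eigendecomp n E V lam"
    and "dk > 0"
  shows "sufficiently_identifying_lpe (\<lambda>d P. node_identifying n d dk P) n E V lam
       \<and> sufficiently_identifying_lpe (\<lambda>d P. adjacency_identifying n E d dk P) n E V lam"
proof -
  have cols: "\<forall>j<n. \<forall>k<n. (\<Sum>i<n. V i j * V i k) = (if j = k then 1 else 0)"
    using assms(2) by (simp add: laplacian_eigendecomp_def)
  then have "\<forall>i<n. \<forall>j<n. (\<Sum>k<n. V i k * V j k) = (if i = j then 1 else 0)"
    by (rule orthonormal_rows_if_orthonormal_cols)
  then have rows: "\<forall>i<n. \<forall>j<n.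
      (\<Sum>a<n. map (V i) [0..<n] ! a * map (V j) [0..<n] ! a) = (if i = j then 1 else 0)"
    by simp
  have "sufficiently_identifying_lpe (\<lambda>d P. node_identifying n d dk P) n E V lam"
    using node_identifying_orthonormal_rows[OF rows assms(3)]
    by (intro sufficiently_identifying_lpe_eigenvector_rows[OF cols])
  moreover have "sufficiently_identifying_lpe (\<lambda>d P. adjacency_identifying n E d dk P) n E V lam"
    using adjacency_identifying_orthonormal_rows[OF rows assms(3,1)]
    by (intro sufficiently_identifying_lpe_eigenvector_rows[OF cols])
  ultimately show ?thesis ..
qed

end
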